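(* Let $\mathcal{X}$ be a Polish space with a complete consistent metric $d$, let $\Theta$ be a Polish space, let $\mathcal{P}\colon\Theta\to\mathcal{M}(\mathcal{X})$ be measurable with image $\mathcal{A}_0:=\mathcal{P}(\Theta)$, assume $\mathcal{P}$ is positive in the sense that $\mu(B_\delta(x))>0$ for all $\mu\in\mathcal{A}_0$, $x\in\mathcal{X}$, $\delta>0$, let $\pi_\Theta\in\mathcal{M}(\Theta)$, $\pi_0:=\mathcal{P}\pi_\Theta\in\mathcal{M}(\mathcal{A}_0)$, and let $\Phi_0\colon\mathcal{M}(\mathcal{X})\to\mathbb{R}$ be measurable and semibounded. For $\alpha>0$ let $\Pi_\alpha$ be as in the context. If \[\lim_{\delta\downarrow0}\sup_{x\in\mathcal{X}}\sup_{\theta\in\Theta}\mathcal{P}(\theta)[B_\delta(x)]=0,\] then for every $\alpha>0$ there exists $\delta_c(\alpha)>0$ such that for all $0<\delta<\delta_c(\alpha)$, all $n\in\mathbb{N}$ and all $(x_1,\dots,x_n)\in\mathcal{X}^n$, \[\mathcal{U}(\Pi_\alpha\,|\,B^n_\delta)\ge\operatorname{ess\,sup}_{\pi_0}(\Phi_0)\quad\text{and}\quad\mathcal{L}(\Pi_\alpha\,|\,B^n_\delta)\le\operatorname{ess\,inf}_{\pi_0}(\Phi_0).\]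
   Context: $\mathcal{M}(\mathcal{X})$ is the set of Borel probability measures on $\mathcal{X}$ with the weak topology, metrized by the Prokhorov metric $d_{\mathcal{M}}(\mu_1,\mu_2):=\inf\{\varepsilon>0:\mu_1(A)\le\mu_2(A^\varepsilon)+\varepsilon\ \forall A\in\mathcal{B}(\mathcal{X})\}$, where $A^\varepsilon=\{x:d(x,x')<\varepsilon\text{ for some }x'\in A\}$. $B_\delta(x)$ is the open $d$-ball of radius $\delta$ about $x$, and $B_\alpha(\mu)$ the open Prokhorov ball. $\mathcal{P}\pi_\Theta$ is the pushforward. Let $\mathcal{A}_\alpha:=\bigcup_{\mu\in\mathcal{A}_0}B_\alpha(\mu)$, $\mathcal{A}:=\{(\mu_1,\mu_2)\in\mathcal{M}(\mathcal{X})^2:\mu_1\in\mathcal{A}_0,\ d_{\mathcal{M}}(\mu_1,\mu_2)<\alpha\}$, with projections $P_0(\mu_1,\mu_2)=\mu_1$, $P_\alpha(\mu_1,\mu_2)=\mu_2$, and $\Pi_\alpha:=\{\pi_\alpha\in\mathcal{M}(\mathcal{A}_\alpha):\exists\pi\in\mathcal{M}(\mathcal{A})\text{ with }P_0\pi=\pi_0,\ P_\alpha\pi=\pi_\alpha\}$. Data: $B^n_\delta:=\prod_{i=1}^nB_\delta(x_i)$ and the data map $\mu\mapsto\mu^n$ (n-fold product). For $\pi\in\mathcal{M}(\mathcal{A}_\alpha)$ with $\mathbb{E}_{\mu\sim\pi}[\mu^n(B^n_\delta)]>0$, the posterior value is $\mathbb{E}_{\mu\sim\pi}[\Phi_0(\mu)\mu^n(B^n_\delta)]/\mathbb{E}_{\mu\sim\pi}[\mu^n(B^n_\delta)]$;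 $\mathcal{U}(\Pi_\alpha|B^n_\delta)$ (resp. $\mathcal{L}$) is the supremum (resp. infimum) of the posterior value over $\pi\in\Pi_\alpha$ with $\mathbb{E}_{\mu\sim\pi}[\mu^n(B^n_\delta)]>0$ ($\sup\varnothing=-\infty$, $\inf\varnothing=+\infty$). $\operatorname{ess\,sup}_{\pi_0}(\Phi_0):=\inf\{r\in\mathbb{R}:\pi_0[\Phi_0>r]=0\}$ and $\operatorname{ess\,inf}_{\pi_0}(\Phi_0):=\sup\{r\in\mathbb{R}:\pi_0[\Phi_0<r]=0\}$. *)

theory Defs
  imports "HOL-Probability.Probability"
begin

text \<open>The space M(X) of Borel probability measures on X, as a measurable space:
  the Giry-monad algebra (sigma-algebra generated by the evaluation maps, which for a
  Polish X is the Borel sigma-algebra of the weak topology / Prokhorov metric).\<close>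
abbreviation MX :: "'a::topological_space measure measure" where
  "MX \<equiv> prob_algebra borel"

definition enlarge :: "'a::metric_space set \<Rightarrow> real \<Rightarrow> 'a set" where
  "enlarge A \<epsilon> = {x. \<exists>x'\<in>A. dist x x' < \<epsilon>}"

definition prokhorov :: "'a::metric_space measure \<Rightarrow> 'a measure \<Rightarrow> real" where
  "prokhorov \<mu>1 \<mu>2 = Inf {\<epsilon>. \<epsilon> > 0 \<and>
      (\<forall>A\<in>sets borel. measure \<mu>1 A \<le> measure \<mu>2 (enlarge A \<epsilon>) + \<epsilon>)}"

definition A_alpha :: "'a::metric_space measure set \<Rightarrow> real \<Rightarrow> 'a measure set" where
  "A_alpha A0 \<alpha> = (\<Union>\<mu>\<in>A0. {\<nu> \<in> space MX. prokhorov \<mu> \<nu> < \<alpha>})"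

definition A_rel :: "'a::metric_space measure set \<Rightarrow> real \<Rightarrow> ('a measure \<times> 'a measure) set" where
  "A_rel A0 \<alpha> = {(\<mu>1, \<mu>2). \<mu>1 \<in> A0 \<and> \<mu>2 \<in> space MX \<and> prokhorov \<mu>1 \<mu>2 < \<alpha>}"

definition Pi_alpha :: "'a::metric_space measure set \<Rightarrow> 'a measure measure \<Rightarrow> real
     \<Rightarrow> 'a measure measure set" where
  "Pi_alpha A0 \<pi>0 \<alpha> =
     {\<pi>\<alpha> \<in> space (prob_algebra (restrict_space MX (A_alpha A0 \<alpha>))).
        \<exists>\<pi> \<in> space (prob_algebra (restrict_space (MX \<Otimes>\<^sub>M MX) (A_rel A0 \<alpha>))).
           distr \<pi> (restrict_space MX A0) fst = \<pi>0 \<and>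
           distr \<pi> (restrict_space MX (A_alpha A0 \<alpha>)) snd = \<pi>\<alpha>}"

text \<open>mu^n(B^n_delta) for data x_0,...,x_{n-1}.\<close>
definition data_lik :: "nat \<Rightarrow> (nat \<Rightarrow> 'a::metric_space) \<Rightarrow> real \<Rightarrow> 'a measure \<Rightarrow> real" where
  "data_lik n x \<delta> \<mu> =
     measure (PiM {..<n} (\<lambda>_. \<mu>)) (PiE {..<n} (\<lambda>i. ball (x i) \<delta>))"

definition ext_integral :: "'b measure \<Rightarrow> ('b \<Rightarrow> real) \<Rightarrow> ereal" where
  "ext_integral M f =
     enn2ereal (\<integral>\<^sup>+ y. ennreal (f y) \<partial>M) - enn2ereal (\<integral>\<^sup>+ y. ennreal (- f y) \<partial>M)"

definition post_value :: "('a::metric_space measure \<Rightarrow> real) \<Rightarrow> nat \<Rightarrow> (nat \<Rightarrow> 'a) \<Rightarrow> real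
     \<Rightarrow> 'a measure measure \<Rightarrow> ereal" where
  "post_value \<Phi> n x \<delta> \<pi> =
     ext_integral \<pi> (\<lambda>\<mu>. \<Phi> \<mu> * data_lik n x \<delta> \<mu>) / ereal (integral\<^sup>L \<pi> (data_lik n x \<delta>))"

definition upper_post :: "('a::metric_space measure \<Rightarrow> real) \<Rightarrow> 'a measure measure set
     \<Rightarrow> nat \<Rightarrow> (nat \<Rightarrow> 'a) \<Rightarrow> real \<Rightarrow> ereal" where
  "upper_post \<Phi> PP n x \<delta> =
     Sup {post_value \<Phi> n x \<delta> \<pi> | \<pi>. \<pi> \<in> PP \<and> integral\<^sup>L \<pi> (data_lik n x \<delta>) > 0}"

definition lower_post :: "('a::metric_space measure \<Rightarrow> real) \<Rightarrow> 'a measure measure set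
     \<Rightarrow> nat \<Rightarrow> (nat \<Rightarrow> 'a) \<Rightarrow> real \<Rightarrow> ereal" where
  "lower_post \<Phi> PP n x \<delta> =
     Inf {post_value \<Phi> n x \<delta> \<pi> | \<pi>. \<pi> \<in> PP \<and> integral\<^sup>L \<pi> (data_lik n x \<delta>) > 0}"

definition ess_sup :: "'b measure \<Rightarrow> ('b \<Rightarrow> real) \<Rightarrow> ereal" where
  "ess_sup M f = Inf (ereal ` {r. emeasure M {y \<in> space M. f y > r} = 0})"

definition ess_inf :: "'b measure \<Rightarrow> ('b \<Rightarrow> real) \<Rightarrow> ereal" where
  "ess_inf M f = Sup (ereal ` {r. emeasure M {y \<in> space M. f y < r} = 0})"

end

theory Submission
  imports Defs
begin

text \<open>Fix a level \<open>r\<close> with \<open>\<pi>\<^sub>0{\<Phi>\<^sub>0 > r} > 0\<close> and let \<open>D = {\<Phi>\<^sub>0 > r}\<close>. Every model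
  \<open>P \<theta> \<notin> D\<close> is replaced by the measure that moves all the mass of the first data ball
  \<open>B\<^sub>\<delta>(x\<^sub>1)\<close> to a point \<open>y\<close> outside it. For \<open>\<delta>\<close> small this mass is below \<open>\<alpha>\<close> uniformly in
  \<open>\<theta>\<close>, so the replacement is Prokhorov-closer than \<open>\<alpha>\<close> and coupling each model with its
  replacement puts the image prior into \<open>\<Pi>\<^sub>\<alpha>\<close>. Its likelihood vanishes off \<open>D\<close> and is positive on \<open>D\<close>,
  so its posterior value is at least \<open>r\<close>; letting \<open>r\<close> approach the essential supremum gives
  the upper bound, and the lower bound is symmetric.\<close>

lemma integral_pos_if_pos_on:
  fixes f :: "'a \<Rightarrow> real"
  assumes f: "integrable M f" and nonneg: "\<And>x. x \<in> space M \<Longrightarrow> 0 \<le> f x"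
    and A: "A \<in> sets M" "emeasure M A \<noteq> 0" and pos: "\<And>x. x \<in> A \<Longrightarrow> 0 < f x"
  shows "0 < integral\<^sup>L M f"
proof -
  have "integral\<^sup>L M f \<noteq> 0"
  proof
    assume "integral\<^sup>L M f = 0"
    then have "AE x in M. f x = 0"
      using integral_nonneg_eq_0_iff_AE[OF f] nonneg by (simp add: AE_I2)
    then have "AE x in M. x \<notin> A"
      by (auto elim!: eventually_mono dest: pos)
    moreover have "{x \<in> space M. \<not> x \<notin> A} = A" using sets.sets_into_space[OF A(1)] by auto
    ultimately have "emeasure M A = 0" by (rule AE_iff_measurable[OF A(1), THEN iffD1, rotated])
    then show False using A(2) by simp
  qed
  moreover have "0 \<le> integral\<^sup>L M f" using nonneg by (simp add: integral_nonneg)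
  ultimately show ?thesis by simp
qed

lemma ext_integral_eq_integral:
  assumes "integrable M f"
  shows "ext_integral M f = ereal (integral\<^sup>L M f)"
proof -
  have "(\<integral>\<^sup>+x. ennreal (f x) \<partial>M) = ennreal (enn2real (\<integral>\<^sup>+x. ennreal (f x) \<partial>M))"
    "(\<integral>\<^sup>+x. ennreal (- f x) \<partial>M) = ennreal (enn2real (\<integral>\<^sup>+x. ennreal (- f x) \<partial>M))"
    using integrableD(2,3)[OF assms] by (simp_all add: ennreal_enn2real_if)
  then show ?thesis
    unfolding ext_integral_def real_lebesgue_integral_def[OF assms]
    by (metis enn2ereal_ennreal enn2real_nonneg ereal_minus(1))
qed

lemma ext_integral_mono_AE:
  assumes "AE x in M. f x \<le> g x"
  shows "ext_integral M f \<le> ext_integral M g"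
  unfolding ext_integral_def
proof (rule ereal_minus_mono)
  show "enn2ereal (\<integral>\<^sup>+x. ennreal (f x) \<partial>M) \<le> enn2ereal (\<integral>\<^sup>+x. ennreal (g x) \<partial>M)"
    unfolding less_eq_ennreal.rep_eq[symmetric]
    by (rule nn_integral_mono_AE) (use assms in \<open>auto elim!: eventually_mono intro: ennreal_leI\<close>)
  show "enn2ereal (\<integral>\<^sup>+x. ennreal (- g x) \<partial>M) \<le> enn2ereal (\<integral>\<^sup>+x. ennreal (- f x) \<partial>M)"
    unfolding less_eq_ennreal.rep_eq[symmetric]
    by (rule nn_integral_mono_AE) (use assms in \<open>auto elim!: eventually_mono intro: ennreal_leI\<close>)
qed

lemma ess_sup_le:
  assumes "\<And>r. emeasure M {y \<in> space M. r < f y} \<noteq> 0 \<Longrightarrow> ereal r \<le> u"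
  shows "ess_sup M f \<le> u"
proof (rule ccontr)
  assume "\<not> ess_sup M f \<le> u"
  then have "u < ess_sup M f" by simp
  then obtain r where r: "u < ereal r" "ereal r < ess_sup M f"
    using ereal_dense2 by blast
  have "emeasure M {y \<in> space M. r < f y} \<noteq> 0"
  proof
    assume "emeasure M {y \<in> space M. r < f y} = 0"
    then have "ess_sup M f \<le> ereal r" unfolding ess_sup_def by (intro Inf_lower imageI) simp
    with r show False by simp
  qed
  then have "ereal r \<le> u" by (rule assms)
  with r show False by simp
qed

lemma ess_inf_ge:
  assumes "\<And>r. emeasure M {y \<in> space M. f y < r} \<noteq> 0 \<Longrightarrow> u \<le> ereal r"
  shows "u \<le> ess_inf M f"
proof (rule ccontr)
  assume "\<not> u \<le> ess_inf M f"
  then have "ess_inf M f < u" by simp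
  then obtain r where r: "ess_inf M f < ereal r" "ereal r < u"
    using ereal_dense2 by blast
  have "emeasure M {y \<in> space M. f y < r} \<noteq> 0"
  proof
    assume "emeasure M {y \<in> space M. f y < r} = 0"
    then have "ereal r \<le> ess_inf M f" unfolding ess_inf_def by (intro Sup_upper imageI) simp
    with r show False by simp
  qed
  then have "u \<le> ereal r" by (rule assms)
  with r show False by simp
qed

lemma data_lik_eq_prod:
  assumes "\<mu> \<in> space MX"
  shows "data_lik n x \<delta> \<mu> = (\<Prod>i<n. measure \<mu> (ball (x i) \<delta>))"
proof -
  interpret prob_space \<mu> using assms by (simp add: space_prob_algebra)
  interpret product_sigma_finite "\<lambda>_::nat. \<mu>"
    by (simp add: product_sigma_finite_def sigma_finite_measure_axioms)
  have sets_\<mu>: "sets \<mu> = sets borel" using assms by (simp add: space_prob_algebra)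
  have "emeasure (PiM {..<n} (\<lambda>_. \<mu>)) (PiE {..<n} (\<lambda>i. ball (x i) \<delta>))
      = (\<Prod>i<n. emeasure \<mu> (ball (x i) \<delta>))"
    by (rule emeasure_PiM) (auto simp: sets_\<mu>)
  also have "\<dots> = ennreal (\<Prod>i<n. measure \<mu> (ball (x i) \<delta>))"
    by (simp add: emeasure_eq_measure prod_ennreal)
  finally show ?thesis
    unfolding data_lik_def measure_def by (simp add: prod_nonneg)
qed

lemma data_lik_measurable [measurable]: "data_lik n x \<delta> \<in> borel_measurable MX"
proof -
  have "(\<lambda>\<mu>. \<Prod>i<n. measure \<mu> (ball (x i) \<delta>)) \<in> borel_measurable MX"
    by measurable
  then show ?thesis
    by (rule measurable_cong[THEN iffD1, rotated]) (simp add: data_lik_eq_prod)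
qed

lemma data_lik_nonneg: "\<mu> \<in> space MX \<Longrightarrow> 0 \<le> data_lik n x \<delta> \<mu>"
  by (simp add: data_lik_eq_prod prod_nonneg)

lemma data_lik_le_1: "\<mu> \<in> space MX \<Longrightarrow> data_lik n x \<delta> \<mu> \<le> 1"
  by (auto simp: data_lik_eq_prod space_prob_algebra intro!: prod_le_1 prob_space.prob_le_1)

lemma data_lik_pos:
  assumes "\<mu> \<in> space MX" "\<And>i. i < n \<Longrightarrow> emeasure \<mu> (ball (x i) \<delta>) > 0"
  shows "0 < data_lik n x \<delta> \<mu>"
proof -
  interpret prob_space \<mu> using assms(1) by (simp add: space_prob_algebra)
  show ?thesis
    using assms(2) by (auto simp: data_lik_eq_prod[OF assms(1)] emeasure_eq_measure intro!: prod_pos)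
qed

lemma data_lik_eq_0:
  assumes "\<mu> \<in> space MX" "i < n" "measure \<mu> (ball (x i) \<delta>) = 0"
  shows "data_lik n x \<delta> \<mu> = 0"
  using assms by (auto simp: data_lik_eq_prod intro!: prod_zero)

lemma integrable_data_lik:
  assumes "\<pi> \<in> space (prob_algebra (restrict_space MX S))"
  shows "integrable \<pi> (data_lik n x \<delta>)"
proof -
  interpret prob_space \<pi> using assms by (simp add: space_prob_algebra)
  have sets_\<pi>: "sets \<pi> = sets (restrict_space MX S)" using assms by (simp add: space_prob_algebra)
  show ?thesis
  proof (rule integrable_const_bound[where B=1])
    show "AE \<mu> in \<pi>. norm (data_lik n x \<delta> \<mu>) \<le> 1"
      using sets_eq_imp_space_eq[OF sets_\<pi>]
      by (auto simp: space_restrict_space data_lik_nonneg data_lik_le_1)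
    show "data_lik n x \<delta> \<in> borel_measurable \<pi>"
      unfolding measurable_cong_sets[OF sets_\<pi> refl] by (rule measurable_restrict_space1) simp
  qed
qed

lemma post_value_ge:
  assumes \<pi>: "\<pi> \<in> space (prob_algebra (restrict_space MX S))"
    and pos: "0 < integral\<^sup>L \<pi> (data_lik n x \<delta>)"
    and bound: "AE \<mu> in \<pi>. r * data_lik n x \<delta> \<mu> \<le> \<Phi> \<mu> * data_lik n x \<delta> \<mu>"
  shows "ereal r \<le> post_value \<Phi> n x \<delta> \<pi>"
proof -
  let ?I = "integral\<^sup>L \<pi> (data_lik n x \<delta>)"
  have "ereal (r * ?I) = ext_integral \<pi> (\<lambda>\<mu>. r * data_lik n x \<delta> \<mu>)"
    using integrable_data_lik[OF \<pi>] by (simp add: ext_integral_eq_integral)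
  also have "\<dots> \<le> ext_integral \<pi> (\<lambda>\<mu>. \<Phi> \<mu> * data_lik n x \<delta> \<mu>)"
    by (rule ext_integral_mono_AE[OF bound])
  finally have "ereal (r * ?I) / ereal ?I \<le> post_value \<Phi> n x \<delta> \<pi>"
    unfolding post_value_def using pos by (intro ereal_divide_right_mono) auto
  then show ?thesis using pos by simp
qed

lemma post_value_le:
  assumes \<pi>: "\<pi> \<in> space (prob_algebra (restrict_space MX S))"
    and pos: "0 < integral\<^sup>L \<pi> (data_lik n x \<delta>)"
    and bound: "AE \<mu> in \<pi>. \<Phi> \<mu> * data_lik n x \<delta> \<mu> \<le> r * data_lik n x \<delta> \<mu>"
  shows "post_value \<Phi> n x \<delta> \<pi> \<le> ereal r"
proof -
  let ?I = "integral\<^sup>L \<pi> (data_lik n x \<delta>)"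
  have "ext_integral \<pi> (\<lambda>\<mu>. \<Phi> \<mu> * data_lik n x \<delta> \<mu>) \<le> ext_integral \<pi> (\<lambda>\<mu>. r * data_lik n x \<delta> \<mu>)"
    by (rule ext_integral_mono_AE[OF bound])
  also have "\<dots> = ereal (r * ?I)"
    using integrable_data_lik[OF \<pi>] by (simp add: ext_integral_eq_integral)
  finally have "post_value \<Phi> n x \<delta> \<pi> \<le> ereal (r * ?I) / ereal ?I"
    unfolding post_value_def using pos by (intro ereal_divide_right_mono) auto
  then show ?thesis using pos by simp
qed

lemma enlarge_open: "open (enlarge A \<epsilon>)"
proof -
  have "enlarge A \<epsilon> = (\<Union>x'\<in>A. ball x' \<epsilon>)"
    by (auto simp: enlarge_def dist_commute)
  then show ?thesis by auto
qed

lemma enlarge_sets [measurable]: "enlarge A \<epsilon> \<in> sets borel"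
  by (simp add: enlarge_open)

lemma subset_enlarge: "0 < \<epsilon> \<Longrightarrow> A \<subseteq> enlarge A \<epsilon>"
  unfolding enlarge_def by force

lemma prokhorov_less:
  assumes "0 < \<epsilon>" "\<epsilon> < \<alpha>"
    and "\<And>A. A \<in> sets borel \<Longrightarrow> measure \<mu>1 A \<le> measure \<mu>2 (enlarge A \<epsilon>) + \<epsilon>"
  shows "prokhorov \<mu>1 \<mu>2 < \<alpha>"
proof -
  have "prokhorov \<mu>1 \<mu>2 \<le> \<epsilon>" unfolding prokhorov_def
    by (rule cInf_lower) (use assms in \<open>auto intro!: bdd_belowI[of _ 0]\<close>)
  then show ?thesis using assms by simp
qed

lemma prokhorov_self_less:
  assumes "\<mu> \<in> space MX" "0 < \<alpha>"
  shows "prokhorov \<mu> \<mu> < \<alpha>"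
proof (rule prokhorov_less)
  interpret prob_space \<mu> using assms by (simp add: space_prob_algebra)
  have sets_\<mu>: "sets \<mu> = sets borel" using assms by (simp add: space_prob_algebra)
  fix A :: "'a set" assume "A \<in> sets borel"
  then have "measure \<mu> A \<le> measure \<mu> (enlarge A (\<alpha>/2))"
    using assms subset_enlarge[of "\<alpha>/2" A] by (intro finite_measure_mono) (auto simp: sets_\<mu>)
  then show "measure \<mu> A \<le> measure \<mu> (enlarge A (\<alpha>/2)) + \<alpha>/2" using assms by simp
qed (use assms in auto)

definition collapse :: "'a::metric_space set \<Rightarrow> 'a \<Rightarrow> 'a measure \<Rightarrow> 'a measure" where
  "collapse B y \<mu> = distr \<mu> borel (\<lambda>z. if z \<in> B then y else z)"

lemma measurable_collapse_map:
  "B \<in> sets borel \<Longrightarrow> (\<lambda>z. if z \<in> B then y else z) \<in> borel \<rightarrow>\<^sub>M borel"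
  by (rule measurable_If_set) simp_all

lemma measurable_collapse: "B \<in> sets borel \<Longrightarrow> collapse B y \<in> MX \<rightarrow>\<^sub>M MX"
  unfolding collapse_def by (rule measurable_distr_prob_space[OF measurable_collapse_map])

lemma prokhorov_collapse_less:
  assumes \<mu>: "\<mu> \<in> space MX" and B: "B \<in> sets borel" and small: "measure \<mu> B < \<alpha>"
  shows "prokhorov \<mu> (collapse B y \<mu>) < \<alpha>"
proof -
  interpret prob_space \<mu> using \<mu> by (simp add: space_prob_algebra)
  have sets_\<mu>: "sets \<mu> = sets borel" using \<mu> by (simp add: space_prob_algebra)
  let ?g = "\<lambda>z. if z \<in> B then y else z"
  have g: "?g \<in> \<mu> \<rightarrow>\<^sub>M borel"
    unfolding measurable_cong_sets[OF sets_\<mu> refl] by (rule measurable_collapse_map[OF B])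
  define \<epsilon> where "\<epsilon> = (measure \<mu> B + \<alpha>) / 2"
  show ?thesis
  proof (rule prokhorov_less)
    show "0 < \<epsilon>" "\<epsilon> < \<alpha>"
      using small measure_nonneg[of \<mu> B] unfolding \<epsilon>_def by (simp_all del: measure_nonneg)
    fix A :: "'a set" assume A: "A \<in> sets borel"
    have "A - B \<subseteq> ?g -` enlarge A \<epsilon> \<inter> space \<mu>"
      using subset_enlarge[OF \<open>0 < \<epsilon>\<close>, of A] by (auto simp: sets_eq_imp_space_eq[OF sets_\<mu>])
    moreover have "?g -` enlarge A \<epsilon> \<inter> space \<mu> \<in> sets \<mu>"
      using g by measurable
    ultimately have "measure \<mu> (A - B) \<le> measure (collapse B y \<mu>) (enlarge A \<epsilon>)"
      unfolding collapse_def using g by (simp add: measure_distr finite_measure_mono)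
    moreover have "measure \<mu> A \<le> measure \<mu> (A - B) + measure \<mu> B"
      using A B finite_measure_Diff'[of A B] finite_measure_mono[of "A \<inter> B" B]
      by (simp add: sets_\<mu>)
    moreover have "measure \<mu> B \<le> \<epsilon>" using small by (simp add: \<epsilon>_def)
    ultimately show "measure \<mu> A \<le> measure (collapse B y \<mu>) (enlarge A \<epsilon>) + \<epsilon>"
      by linarith
  qed
qed

lemma measure_collapse_eq_0:
  assumes "\<mu> \<in> space MX" "B \<in> sets borel" "y \<notin> B"
  shows "measure (collapse B y \<mu>) B = 0"
proof -
  have sets_\<mu>: "sets \<mu> = sets borel" using assms by (simp add: space_prob_algebra)
  have "(\<lambda>z. if z \<in> B then y else z) \<in> \<mu> \<rightarrow>\<^sub>M borel"
    unfolding measurable_cong_sets[OF sets_\<mu> refl] by (rule measurable_collapse_map[OF assms(2)])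
  moreover have "(\<lambda>z. if z \<in> B then y else z) -` B = {}" using assms(3) by (auto split: if_splits)
  ultimately show ?thesis unfolding collapse_def using assms(2) by (simp add: measure_distr)
qed

lemma measurable_A_alpha:
  assumes Q: "Q \<in> M \<rightarrow>\<^sub>M MX" and close: "\<And>\<theta>. \<theta> \<in> space M \<Longrightarrow> prokhorov (P \<theta>) (Q \<theta>) < \<alpha>"
  shows "Q \<in> M \<rightarrow>\<^sub>M restrict_space MX (A_alpha (range P) \<alpha>)"
proof (rule measurable_restrict_space2[OF _ Q])
  show "Q \<in> space M \<rightarrow> A_alpha (range P) \<alpha>"
    using close measurable_space[OF Q] by (auto simp: A_alpha_def)
qed

lemma distr_in_Pi_alpha:
  assumes P: "P \<in> borel \<rightarrow>\<^sub>M MX" and Q: "Q \<in> borel \<rightarrow>\<^sub>M MX"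
    and prior: "\<pi>\<Theta> \<in> space (prob_algebra borel)"
    and close: "\<And>\<theta>. prokhorov (P \<theta>) (Q \<theta>) < \<alpha>"
  shows "distr \<pi>\<Theta> (restrict_space MX (A_alpha (range P) \<alpha>)) Q
           \<in> Pi_alpha (range P) (distr \<pi>\<Theta> (restrict_space MX (range P)) P) \<alpha>"
proof -
  interpret prob_space \<pi>\<Theta> using prior by (simp add: space_prob_algebra)
  have sets_\<pi>\<Theta>: "sets \<pi>\<Theta> = sets borel" using prior by (simp add: space_prob_algebra)
  let ?R = "restrict_space (MX \<Otimes>\<^sub>M MX) (A_rel (range P) \<alpha>)"
  let ?A\<alpha> = "restrict_space MX (A_alpha (range P) \<alpha>)"
  have pair: "(\<lambda>\<theta>. (P \<theta>, Q \<theta>)) \<in> \<pi>\<Theta> \<rightarrow>\<^sub>M ?R"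
    unfolding measurable_cong_sets[OF sets_\<pi>\<Theta> refl]
  proof (rule measurable_restrict_space2)
    show "(\<lambda>\<theta>. (P \<theta>, Q \<theta>)) \<in> borel \<rightarrow>\<^sub>M MX \<Otimes>\<^sub>M MX" using P Q by (rule measurable_Pair)
    show "(\<lambda>\<theta>. (P \<theta>, Q \<theta>)) \<in> space borel \<rightarrow> A_rel (range P) \<alpha>"
      using close measurable_space[OF Q] unfolding A_rel_def by simp
  qed
  have Q': "Q \<in> \<pi>\<Theta> \<rightarrow>\<^sub>M ?A\<alpha>"
    unfolding measurable_cong_sets[OF sets_\<pi>\<Theta> refl] using Q close by (rule measurable_A_alpha)
  have fst: "fst \<in> ?R \<rightarrow>\<^sub>M restrict_space MX (range P)"
    by (intro measurable_restrict_space2 measurable_restrict_space1 measurable_fst)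
       (auto simp: space_restrict_space A_rel_def)
  have snd: "snd \<in> ?R \<rightarrow>\<^sub>M ?A\<alpha>"
    by (intro measurable_restrict_space2 measurable_restrict_space1 measurable_snd)
       (auto simp: space_restrict_space A_rel_def A_alpha_def)
  let ?\<pi> = "distr \<pi>\<Theta> ?R (\<lambda>\<theta>. (P \<theta>, Q \<theta>))"
  have coupling: "?\<pi> \<in> space (prob_algebra ?R)"
    using pair by (simp add: space_prob_algebra prob_space_distr)
  have marginal_fst: "distr ?\<pi> (restrict_space MX (range P)) fst = distr \<pi>\<Theta> (restrict_space MX (range P)) P"
    by (subst distr_distr[OF fst pair]) (simp add: comp_def)
  have marginal_snd: "distr ?\<pi> ?A\<alpha> snd = distr \<pi>\<Theta> ?A\<alpha> Q"
    by (subst distr_distr[OF snd pair]) (simp add: comp_def)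
  have "distr \<pi>\<Theta> ?A\<alpha> Q \<in> space (prob_algebra ?A\<alpha>)"
    using Q' by (simp add: space_prob_algebra prob_space_distr)
  then show ?thesis
    unfolding Pi_alpha_def mem_Collect_eq
    by (intro conjI bexI[OF _ coupling]) (simp_all only: marginal_fst marginal_snd)
qed

lemma space_Pi_alpha:
  "\<pi> \<in> Pi_alpha A0 \<pi>0 \<alpha> \<Longrightarrow> space \<pi> \<subseteq> space MX"
  by (auto simp: Pi_alpha_def space_prob_algebra space_restrict_space
           dest!: sets_eq_imp_space_eq)

lemma emeasure_prior_image:
  assumes P: "P \<in> borel \<rightarrow>\<^sub>M MX" and prior: "\<pi>\<Theta> \<in> space (prob_algebra borel)"
    and S: "{\<mu> \<in> space MX. Q \<mu>} \<in> sets MX"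
  shows "emeasure (distr \<pi>\<Theta> (restrict_space MX (range P)) P)
           {\<mu> \<in> space (distr \<pi>\<Theta> (restrict_space MX (range P)) P). Q \<mu>}
         = emeasure \<pi>\<Theta> {\<theta>. Q (P \<theta>)}"
proof -
  have sets_\<pi>\<Theta>: "sets \<pi>\<Theta> = sets borel" using prior by (simp add: space_prob_algebra)
  have P': "P \<in> \<pi>\<Theta> \<rightarrow>\<^sub>M restrict_space MX (range P)"
    unfolding measurable_cong_sets[OF sets_\<pi>\<Theta> refl]
    by (rule measurable_restrict_space2) (use P in auto)
  have "{\<mu> \<in> space (distr \<pi>\<Theta> (restrict_space MX (range P)) P). Q \<mu>} = range P \<inter> {\<mu> \<in> space MX. Q \<mu>}"
    by (auto simp: space_restrict_space)
  moreover have "range P \<inter> {\<mu> \<in> space MX. Q \<mu>} \<in> sets (restrict_space MX (range P))"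
    unfolding sets_restrict_space using S by (rule imageI)
  moreover have "P -` (range P \<inter> {\<mu> \<in> space MX. Q \<mu>}) \<inter> space \<pi>\<Theta> = {\<theta>. Q (P \<theta>)}"
    using measurable_space[OF P] sets_eq_imp_space_eq[OF sets_\<pi>\<Theta>] by auto
  ultimately show ?thesis by (simp add: emeasure_distr[OF P'])
qed

lemma Pi_alpha_likelihood_concentrated:
  fixes x :: "nat \<Rightarrow> 'x::metric_space"
  assumes P: "P \<in> borel \<rightarrow>\<^sub>M MX" and prior: "\<pi>\<Theta> \<in> space (prob_algebra borel)"
    and lik_pos: "\<And>\<theta>. 0 < data_lik n x \<delta> (P \<theta>)"
    and small: "\<And>\<theta>. measure (P \<theta>) (ball (x 0) \<delta>) < \<alpha>"
    and y: "y \<notin> ball (x 0) \<delta>" and n: "0 < n"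
    and D: "D \<in> sets MX" and D_nonnull: "emeasure \<pi>\<Theta> (P -` D) \<noteq> 0"
  obtains \<pi> where "\<pi> \<in> Pi_alpha (range P) (distr \<pi>\<Theta> (restrict_space MX (range P)) P) \<alpha>"
    and "0 < integral\<^sup>L \<pi> (data_lik n x \<delta>)"
    and "AE \<mu> in \<pi>. \<mu> \<notin> D \<longrightarrow> data_lik n x \<delta> \<mu> = 0"
proof -
  have sets_\<pi>\<Theta>: "sets \<pi>\<Theta> = sets borel" using prior by (simp add: space_prob_algebra)
  have P_space: "P \<theta> \<in> space MX" for \<theta> using measurable_space[OF P] by simp
  define T where "T \<mu> = (if \<mu> \<in> D then \<mu> else collapse (ball (x 0) \<delta>) y \<mu>)" for \<mu>
  have T: "T \<in> MX \<rightarrow>\<^sub>M MX"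
    unfolding T_def using D by (intro measurable_If_set measurable_ident_sets measurable_collapse) auto
  have TP: "(\<lambda>\<theta>. T (P \<theta>)) \<in> borel \<rightarrow>\<^sub>M MX" using measurable_comp[OF P T] by (simp add: comp_def)
  have "0 < \<alpha>" using small[of undefined] measure_nonneg[of "P undefined"] by (meson le_less_trans)
  then have close: "prokhorov (P \<theta>) (T (P \<theta>)) < \<alpha>" for \<theta>
    unfolding T_def using prokhorov_self_less[OF P_space] prokhorov_collapse_less[OF P_space _ small]
    by simp
  have lik_T: "data_lik n x \<delta> (T \<mu>) = 0" if "\<mu> \<in> space MX" "T \<mu> \<notin> D" for \<mu>
    using that y n measurable_space[OF measurable_collapse[of "ball (x 0) \<delta>"]]
    by (auto simp: T_def split: if_splits intro!: data_lik_eq_0[of _ 0] measure_collapse_eq_0)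
  let ?A\<alpha> = "restrict_space MX (A_alpha (range P) \<alpha>)"
  let ?\<pi> = "distr \<pi>\<Theta> ?A\<alpha> (\<lambda>\<theta>. T (P \<theta>))"
  have \<pi>: "?\<pi> \<in> Pi_alpha (range P) (distr \<pi>\<Theta> (restrict_space MX (range P)) P) \<alpha>"
    using P TP prior close by (rule distr_in_Pi_alpha)
  have TP': "(\<lambda>\<theta>. T (P \<theta>)) \<in> \<pi>\<Theta> \<rightarrow>\<^sub>M ?A\<alpha>"
    unfolding measurable_cong_sets[OF sets_\<pi>\<Theta> refl] using TP close by (rule measurable_A_alpha)
  have "0 < integral\<^sup>L \<pi>\<Theta> (\<lambda>\<theta>. data_lik n x \<delta> (T (P \<theta>)))"
  proof (rule integral_pos_if_pos_on)
    show "integrable \<pi>\<Theta> (\<lambda>\<theta>. data_lik n x \<delta> (T (P \<theta>)))"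
      using integrable_data_lik[of ?\<pi>] \<pi> by (auto simp: Pi_alpha_def intro: integrable_distr[OF TP'])
    show "P -` D \<in> sets \<pi>\<Theta>" using measurable_sets[OF P D] by (simp add: sets_\<pi>\<Theta>)
    show "0 \<le> data_lik n x \<delta> (T (P \<theta>))" for \<theta>
      using measurable_space[OF TP] by (simp add: data_lik_nonneg)
    show "0 < data_lik n x \<delta> (T (P \<theta>))" if "\<theta> \<in> P -` D" for \<theta>
      using that lik_pos by (simp add: T_def)
  qed (fact D_nonnull)
  moreover have "Measurable.pred ?A\<alpha> (\<lambda>\<mu>. \<mu> \<notin> D \<longrightarrow> data_lik n x \<delta> \<mu> = 0)"
    using D[measurable] by (intro measurable_restrict_space1) measurable
  then have "AE \<mu> in ?\<pi>. \<mu> \<notin> D \<longrightarrow> data_lik n x \<delta> \<mu> = 0"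
    by (subst AE_distr_iff[OF TP']) (auto simp: pred_def intro!: AE_I2 lik_T P_space)
  moreover have "integral\<^sup>L ?\<pi> (data_lik n x \<delta>) = integral\<^sup>L \<pi>\<Theta> (\<lambda>\<theta>. data_lik n x \<delta> (T (P \<theta>)))"
    by (rule integral_distr[OF TP'], rule measurable_restrict_space1) simp
  ultimately show ?thesis using \<pi> that by simp
qed

lemma upper_post_ge:
  fixes x :: "nat \<Rightarrow> 'x::metric_space"
  assumes P: "P \<in> borel \<rightarrow>\<^sub>M MX" and prior: "\<pi>\<Theta> \<in> space (prob_algebra borel)"
    and lik_pos: "\<And>\<theta>. 0 < data_lik n x \<delta> (P \<theta>)"
    and small: "\<And>\<theta>. measure (P \<theta>) (ball (x 0) \<delta>) < \<alpha>"
    and y: "y \<notin> ball (x 0) \<delta>" and n: "0 < n"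
    and \<Phi>: "\<Phi> \<in> borel_measurable MX"
  defines "\<pi>0 \<equiv> distr \<pi>\<Theta> (restrict_space MX (range P)) P"
  assumes nonnull: "emeasure \<pi>0 {\<mu> \<in> space \<pi>0. r < \<Phi> \<mu>} \<noteq> 0"
  shows "ereal r \<le> upper_post \<Phi> (Pi_alpha (range P) \<pi>0 \<alpha>) n x \<delta>"
proof -
  let ?D = "{\<mu> \<in> space MX. r < \<Phi> \<mu>}"
  have D: "?D \<in> sets MX" using \<Phi> by measurable
  have "P -` ?D = {\<theta>. r < \<Phi> (P \<theta>)}" using measurable_space[OF P] by auto
  then have "emeasure \<pi>\<Theta> (P -` ?D) \<noteq> 0"
    using nonnull emeasure_prior_image[OF P prior D] unfolding \<pi>0_def by simp
  then obtain \<pi> where \<pi>: "\<pi> \<in> Pi_alpha (range P) \<pi>0 \<alpha>"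
    and pos: "0 < integral\<^sup>L \<pi> (data_lik n x \<delta>)"
    and concentrated: "AE \<mu> in \<pi>. \<mu> \<notin> ?D \<longrightarrow> data_lik n x \<delta> \<mu> = 0"
    unfolding \<pi>0_def by (rule Pi_alpha_likelihood_concentrated[OF P prior lik_pos small y n D])
  have "AE \<mu> in \<pi>. r * data_lik n x \<delta> \<mu> \<le> \<Phi> \<mu> * data_lik n x \<delta> \<mu>"
  proof (rule AE_mp[OF concentrated AE_I2], intro impI)
    fix \<mu> assume "\<mu> \<in> space \<pi>" "\<mu> \<notin> ?D \<longrightarrow> data_lik n x \<delta> \<mu> = 0"
    then show "r * data_lik n x \<delta> \<mu> \<le> \<Phi> \<mu> * data_lik n x \<delta> \<mu>"
      using space_Pi_alpha[OF \<pi>] data_lik_nonneg by (force intro: mult_right_mono)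
  qed
  then have "ereal r \<le> post_value \<Phi> n x \<delta> \<pi>"
    using \<pi> pos by (intro post_value_ge) (auto simp: Pi_alpha_def)
  also have "\<dots> \<le> upper_post \<Phi> (Pi_alpha (range P) \<pi>0 \<alpha>) n x \<delta>"
    unfolding upper_post_def using \<pi> pos by (intro Sup_upper) auto
  finally show ?thesis .
qed

lemma lower_post_le:
  fixes x :: "nat \<Rightarrow> 'x::metric_space"
  assumes P: "P \<in> borel \<rightarrow>\<^sub>M MX" and prior: "\<pi>\<Theta> \<in> space (prob_algebra borel)"
    and lik_pos: "\<And>\<theta>. 0 < data_lik n x \<delta> (P \<theta>)"
    and small: "\<And>\<theta>. measure (P \<theta>) (ball (x 0) \<delta>) < \<alpha>"
    and y: "y \<notin> ball (x 0) \<delta>" and n: "0 < n"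
    and \<Phi>: "\<Phi> \<in> borel_measurable MX"
  defines "\<pi>0 \<equiv> distr \<pi>\<Theta> (restrict_space MX (range P)) P"
  assumes nonnull: "emeasure \<pi>0 {\<mu> \<in> space \<pi>0. \<Phi> \<mu> < r} \<noteq> 0"
  shows "lower_post \<Phi> (Pi_alpha (range P) \<pi>0 \<alpha>) n x \<delta> \<le> ereal r"
proof -
  let ?D = "{\<mu> \<in> space MX. \<Phi> \<mu> < r}"
  have D: "?D \<in> sets MX" using \<Phi> by measurable
  have "P -` ?D = {\<theta>. \<Phi> (P \<theta>) < r}" using measurable_space[OF P] by auto
  then have "emeasure \<pi>\<Theta> (P -` ?D) \<noteq> 0"
    using nonnull emeasure_prior_image[OF P prior D] unfolding \<pi>0_def by simp
  then obtain \<pi> where \<pi>: "\<pi> \<in> Pi_alpha (range P) \<pi>0 \<alpha>"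
    and pos: "0 < integral\<^sup>L \<pi> (data_lik n x \<delta>)"
    and concentrated: "AE \<mu> in \<pi>. \<mu> \<notin> ?D \<longrightarrow> data_lik n x \<delta> \<mu> = 0"
    unfolding \<pi>0_def by (rule Pi_alpha_likelihood_concentrated[OF P prior lik_pos small y n D])
  have "AE \<mu> in \<pi>. \<Phi> \<mu> * data_lik n x \<delta> \<mu> \<le> r * data_lik n x \<delta> \<mu>"
  proof (rule AE_mp[OF concentrated AE_I2], intro impI)
    fix \<mu> assume "\<mu> \<in> space \<pi>" "\<mu> \<notin> ?D \<longrightarrow> data_lik n x \<delta> \<mu> = 0"
    then show "\<Phi> \<mu> * data_lik n x \<delta> \<mu> \<le> r * data_lik n x \<delta> \<mu>"
      using space_Pi_alpha[OF \<pi>] data_lik_nonneg by (force intro: mult_right_mono)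
  qed
  then have "post_value \<Phi> n x \<delta> \<pi> \<le> ereal r"
    using \<pi> pos by (intro post_value_le) (auto simp: Pi_alpha_def)
  moreover have "lower_post \<Phi> (Pi_alpha (range P) \<pi>0 \<alpha>) n x \<delta> \<le> post_value \<Phi> n x \<delta> \<pi>"
    unfolding lower_post_def using \<pi> pos by (intro Inf_lower) auto
  ultimately show ?thesis by simp
qed

lemma eventually_ball_measure_less:
  fixes P :: "'t \<Rightarrow> 'x::metric_space measure"
  assumes P: "\<And>\<theta>. P \<theta> \<in> space MX"
    and small_balls: "((\<lambda>\<delta>. SUP z. SUP \<theta>. measure (P \<theta>) (ball z \<delta>)) \<longlongrightarrow> 0) (at_right 0)"
    and "0 < \<epsilon>"
  shows "\<forall>\<^sub>F \<delta> in at_right 0. \<forall>z \<theta>. measure (P \<theta>) (ball z \<delta>) < \<epsilon>"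
  using order_tendstoD(2)[OF small_balls \<open>0 < \<epsilon>\<close>]
proof eventually_elim
  case (elim \<delta>)
  have le_1: "measure (P \<theta>) A \<le> 1" for \<theta> A
    using P by (simp add: space_prob_algebra prob_space.prob_le_1)
  have bdd: "bdd_above (range (\<lambda>\<theta>. measure (P \<theta>) (ball z \<delta>)))" for z
    using le_1 by (intro bdd_aboveI) auto
  have "bdd_above (range (\<lambda>z. SUP \<theta>. measure (P \<theta>) (ball z \<delta>)))"
    using le_1 by (intro bdd_aboveI[of _ 1]) (auto intro: cSUP_least)
  then have "measure (P \<theta>) (ball z \<delta>) \<le> (SUP z. SUP \<theta>. measure (P \<theta>) (ball z \<delta>))" for z \<theta>
    using bdd by (meson UNIV_I cSUP_upper order_trans)
  with elim show ?case by (meson le_less_trans)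
qed

lemma ex_not_in_if_measure_less_1:
  assumes "\<mu> \<in> space MX" "measure \<mu> A < 1"
  shows "\<exists>y. y \<notin> A"
proof (rule ccontr)
  assume "\<nexists>y. y \<notin> A"
  then have "A = space \<mu>"
    using assms(1) by (auto simp: space_prob_algebra dest: sets_eq_imp_space_eq)
  with assms show False by (simp add: space_prob_algebra prob_space.prob_space)
qed

theorem theorem6p4:
  fixes P :: "'t::polish_space \<Rightarrow> 'x::polish_space measure"
    and \<pi>\<Theta> :: "'t measure"
    and \<Phi>0 :: "'x measure \<Rightarrow> real"
  assumes P_meas: "P \<in> borel \<rightarrow>\<^sub>M MX"
    and P_pos: "\<And>\<mu> x \<delta>. \<mu> \<in> range P \<Longrightarrow> \<delta> > 0 \<Longrightarrow> emeasure \<mu> (ball x \<delta>) > 0"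
    and prior: "\<pi>\<Theta> \<in> space (prob_algebra borel)"
    and Phi_meas: "\<Phi>0 \<in> borel_measurable MX"
    and Phi_semibdd: "(\<exists>c. \<forall>\<mu>\<in>space MX. \<Phi>0 \<mu> \<le> c) \<or> (\<exists>c. \<forall>\<mu>\<in>space MX. c \<le> \<Phi>0 \<mu>)"
    and small_balls: "((\<lambda>\<delta>. SUP x. SUP \<theta>. measure (P \<theta>) (ball x \<delta>)) \<longlongrightarrow> 0) (at_right 0)"
  shows "\<forall>\<alpha>>0. \<exists>\<delta>c>0. \<forall>\<delta> n (x :: nat \<Rightarrow> 'x). 0 < \<delta> \<and> \<delta> < \<delta>c \<and> 1 \<le> n \<longrightarrow>
           (let \<pi>0 = distr \<pi>\<Theta> (restrict_space MX (range P)) P;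
                Pa = Pi_alpha (range P) \<pi>0 \<alpha>
            in upper_post \<Phi>0 Pa n x \<delta> \<ge> ess_sup \<pi>0 \<Phi>0 \<and>
               lower_post \<Phi>0 Pa n x \<delta> \<le> ess_inf \<pi>0 \<Phi>0)"
proof (intro allI impI)
  fix \<alpha> :: real assume "0 < \<alpha>"
  have P_space: "P \<theta> \<in> space MX" for \<theta> using measurable_space[OF P_meas] by simp
  obtain \<delta>c where "0 < \<delta>c"
    and small: "\<And>\<delta> z \<theta>. 0 < \<delta> \<Longrightarrow> \<delta> < \<delta>c \<Longrightarrow> measure (P \<theta>) (ball z \<delta>) < min \<alpha> 1"
    using eventually_ball_measure_less[OF P_space small_balls, of "min \<alpha> 1"] \<open>0 < \<alpha>\<close>
    unfolding eventually_at_right_field by auto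
  show "\<exists>\<delta>c>0. \<forall>\<delta> n (x :: nat \<Rightarrow> 'x). 0 < \<delta> \<and> \<delta> < \<delta>c \<and> 1 \<le> n \<longrightarrow>
           (let \<pi>0 = distr \<pi>\<Theta> (restrict_space MX (range P)) P; Pa = Pi_alpha (range P) \<pi>0 \<alpha>
            in upper_post \<Phi>0 Pa n x \<delta> \<ge> ess_sup \<pi>0 \<Phi>0 \<and> lower_post \<Phi>0 Pa n x \<delta> \<le> ess_inf \<pi>0 \<Phi>0)"
  proof (intro exI[of _ \<delta>c] conjI allI impI \<open>0 < \<delta>c\<close>)
    fix \<delta> :: real and n :: nat and x :: "nat \<Rightarrow> 'x" assume "0 < \<delta> \<and> \<delta> < \<delta>c \<and> 1 \<le> n"
    then have "0 < \<delta>" "0 < n"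
      and small_\<delta>: "\<And>\<theta>. measure (P \<theta>) (ball (x 0) \<delta>) < \<alpha>" "\<And>\<theta>. measure (P \<theta>) (ball (x 0) \<delta>) < 1"
      using small by auto
    obtain y where y: "y \<notin> ball (x 0) \<delta>"
      using ex_not_in_if_measure_less_1[OF P_space small_\<delta>(2)] by auto
    have lik_pos: "0 < data_lik n x \<delta> (P \<theta>)" for \<theta>
      using P_space P_pos \<open>0 < \<delta>\<close> by (intro data_lik_pos) auto
    note bounds = upper_post_ge[OF P_meas prior lik_pos small_\<delta>(1) y \<open>0 < n\<close> Phi_meas]
      lower_post_le[OF P_meas prior lik_pos small_\<delta>(1) y \<open>0 < n\<close> Phi_meas]
    show "let \<pi>0 = distr \<pi>\<Theta> (restrict_space MX (range P)) P; Pa = Pi_alpha (range P) \<pi>0 \<alpha>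
          in upper_post \<Phi>0 Pa n x \<delta> \<ge> ess_sup \<pi>0 \<Phi>0 \<and> lower_post \<Phi>0 Pa n x \<delta> \<le> ess_inf \<pi>0 \<Phi>0"
      unfolding Let_def by (auto intro!: ess_sup_le ess_inf_ge bounds)
  qed
qed

end
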